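(* The $q$-Schröder numbers $r_n(q)=\sum_{k=0}^n\binom{n+k}{n-k}C_kq^{n-k}$, $n\ge0$, where $C_k=\frac{1}{k+1}\binom{2k}{k}$ is the $k$-th Catalan number, form a $q$-log-convex sequence.
   Context: For real polynomials $f,g$ write $f\le_q g$ if $g-f$ has nonnegative coefficients; a sequence $\{P_n(q)\}_{n\ge0}$ is $q$-log-convex if $P_n(q)^2\le_q P_{n-1}(q)P_{n+1}(q)$ for all $n\ge 1$. *)

theory Defs
  imports "HOL-Computational_Algebra.Polynomial"
begin

definition q_le :: "real poly \<Rightarrow> real poly \<Rightarrow> bool" where
  "q_le f g \<longleftrightarrow> (\<forall>i. coeff (g - f) i \<ge> 0)"

definition q_log_convex :: "(nat \<Rightarrow> real poly) \<Rightarrow> bool" where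
  "q_log_convex P \<longleftrightarrow> (\<forall>n\<ge>1. q_le ((P n)^2) (P (n - 1) * P (n + 1)))"

definition catalan :: "nat \<Rightarrow> real" where
  "catalan k = real ((2*k) choose k) / real (k + 1)"

definition q_schroeder :: "nat \<Rightarrow> real poly" where
  "q_schroeder n = (\<Sum>k=0..n. monom (real ((n + k) choose (n - k)) * catalan k) (n - k))"

end

theory Submission
  imports Defs
begin

text \<open>
  Work with polynomials in x over \<real>[q]. Put \<Phi> = 1 + (2 + q) x + (1 + q) x^2 and
  \<Psi> = \<Phi> - x \<Phi>', and let T(n, k) be the coefficient of x^(n - k) in \<Phi>^n \<Psi>.
  Multiplying by \<Phi> shows that T is generated by the tridiagonal production matrix with
  entries 1, 2 + q, 1 + q, whose 2 x 2 minors have nonnegative coefficients; by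
  Cauchy--Binet, so do all 2 x 2 minors of T.

  Since (n + 1) \<Phi>^n \<Psi> = (n + 1) \<Phi>^(n + 1) - x (\<Phi>^(n + 1))', the first column is
  T(n, 0) = [x^n] \<Phi>^(n + 1) / (n + 1); expanding \<Phi> = (1 + x)^2 + q x (1 + x) and a binomial
  identity give r(n + 1) = (1 + q) T(n, 0). The recurrence of column 0 then turns
  r(n) r(n + 2) - r(n + 1)^2 into (1 + q)^3 times the minor T(n - 1, 0) T(n, 1) - T(n - 1, 1) T(n, 0).
\<close>

definition nonneg_coeffs :: "real poly \<Rightarrow> bool" where
  "nonneg_coeffs p \<longleftrightarrow> (\<forall>i. 0 \<le> coeff p i)"

lemma q_le_iff_nonneg_coeffs: "q_le f g \<longleftrightarrow> nonneg_coeffs (g - f)"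
  by (simp add: q_le_def nonneg_coeffs_def)

lemma nonneg_coeffs_0 [simp]: "nonneg_coeffs 0"
  by (simp add: nonneg_coeffs_def)

lemma nonneg_coeffs_pCons [simp]: "nonneg_coeffs (pCons a p) \<longleftrightarrow> 0 \<le> a \<and> nonneg_coeffs p"
  unfolding nonneg_coeffs_def by (metis coeff_pCons_0 coeff_pCons_Suc not0_implies_Suc)

lemma nonneg_coeffs_1 [simp]: "nonneg_coeffs 1"
  by (simp add: one_pCons)

lemma nonneg_coeffs_add: "nonneg_coeffs p \<Longrightarrow> nonneg_coeffs q \<Longrightarrow> nonneg_coeffs (p + q)"
  by (simp add: nonneg_coeffs_def)

lemma nonneg_coeffs_mult: "nonneg_coeffs p \<Longrightarrow> nonneg_coeffs q \<Longrightarrow> nonneg_coeffs (p * q)"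
  unfolding nonneg_coeffs_def coeff_mult by (auto intro!: sum_nonneg)

lemma nonneg_coeffs_power: "nonneg_coeffs p \<Longrightarrow> nonneg_coeffs (p ^ n)"
  by (induction n) (simp_all add: nonneg_coeffs_mult)

lemma nonneg_coeffs_sum: "(\<And>i. i \<in> A \<Longrightarrow> nonneg_coeffs (f i)) \<Longrightarrow> nonneg_coeffs (\<Sum>i\<in>A. f i)"
  unfolding nonneg_coeffs_def coeff_sum by (auto intro!: sum_nonneg)

section \<open>Total positivity from a production matrix\<close>

lemma cauchy_binet_two_by_two:
  fixes x y :: "nat \<Rightarrow> 'a::comm_ring_1"
  shows "(\<Sum>p<N. x p * J p k) * (\<Sum>p<N. y p * J p l) - (\<Sum>p<N. x p * J p l) * (\<Sum>p<N. y p * J p k) =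
    (\<Sum>p<N. \<Sum>q<p. (x q * y p - x p * y q) * (J q k * J p l - J q l * J p k))"
proof (induction N)
  case 0
  then show ?case by simp
next
  case (Suc N)
  define A where "A = (\<Sum>p<N. x p * J p k)"
  define B where "B = (\<Sum>p<N. y p * J p l)"
  define C where "C = (\<Sum>p<N. x p * J p l)"
  define D where "D = (\<Sum>p<N. y p * J p k)"
  have "(\<Sum>q<N. (x q * y N - x N * y q) * (J q k * J N l - J q l * J N k)) =
      y N * J N l * A - y N * J N k * C - x N * J N l * D + x N * J N k * B"
    unfolding A_def B_def C_def D_def
    by (simp add: sum_distrib_left sum_subtractf sum.distrib algebra_simps)
  moreover have "(A + x N * J N k) * (B + y N * J N l) - (C + x N * J N l) * (D + y N * J N k) =
      (A * B - C * D) + (y N * J N l * A - y N * J N k * C - x N * J N l * D + x N * J N k * B)"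
    by (simp add: algebra_simps)
  ultimately show ?case
    using Suc.IH by (simp add: A_def B_def C_def D_def)
qed

lemma production_matrix_minors_nonneg:
  fixes T J :: "nat \<Rightarrow> nat \<Rightarrow> real poly"
  assumes row_0: "\<And>l. 0 < l \<Longrightarrow> T 0 l = 0"
    and row_Suc: "\<And>n k N. Suc k < N \<Longrightarrow> T (Suc n) k = (\<Sum>p<N. T n p * J p k)"
    and T_nonneg: "\<And>n k. nonneg_coeffs (T n k)"
    and J_minors: "\<And>q p k l. q < p \<Longrightarrow> k < l \<Longrightarrow> nonneg_coeffs (J q k * J p l - J q l * J p k)"
  shows "i < j \<Longrightarrow> k < l \<Longrightarrow> nonneg_coeffs (T i k * T j l - T i l * T j k)"
proof (induction i arbitrary: j k l)
  case 0
  then show ?case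
    using row_0 T_nonneg by (simp add: nonneg_coeffs_mult)
next
  case (Suc i)
  then obtain j' where j: "j = Suc j'" and "i < j'"
    by (cases j) auto
  have k: "Suc k < Suc (Suc l)" and l: "Suc l < Suc (Suc l)"
    using \<open>k < l\<close> by simp_all
  have "T (Suc i) k * T j l - T (Suc i) l * T j k =
      (\<Sum>p<Suc (Suc l). \<Sum>q<p. (T i q * T j' p - T i p * T j' q) * (J q k * J p l - J q l * J p k))"
    unfolding j row_Suc[OF k] row_Suc[OF l] by (rule cauchy_binet_two_by_two)
  also have "nonneg_coeffs \<dots>"
    using \<open>i < j'\<close> Suc by (intro nonneg_coeffs_sum nonneg_coeffs_mult Suc.IH J_minors) auto
  finally show ?case .
qed

section \<open>The Schroeder triangle\<close>

lemma coeff_power_mult_sub_x_pderiv: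
  fixes p :: "'a::idom poly"
  shows "of_nat (Suc n) * coeff (p ^ n * (p - [:0, 1:] * pderiv p)) L =
    (of_nat (Suc n) - of_nat L) * coeff (p ^ Suc n) L"
proof -
  have "p ^ n * (p - [:0, 1:] * pderiv p) = p ^ Suc n - [:0, 1:] * (p ^ n * pderiv p)"
    by (simp add: algebra_simps)
  then have "smult (of_nat (Suc n)) (p ^ n * (p - [:0, 1:] * pderiv p)) =
      smult (of_nat (Suc n)) (p ^ Suc n) - [:0, 1:] * pderiv (p ^ Suc n)"
    unfolding pderiv_power_Suc by (simp only: smult_diff_right mult_smult_left mult_smult_right)
  from arg_cong[OF this, of "\<lambda>q. coeff q L"] show ?thesis
    by (cases L) (simp_all add: coeff_pderiv algebra_simps)
qed

text \<open>Polynomials in \<open>x\<close> over \<open>\<real>[q]\<close>: \<open>[:0, 1:]\<close> is \<open>x\<close>, and \<open>[:2, 1:]\<close>, \<open>[:1, 1:]\<close> are \<open>2 + q\<close>, \<open>1 + q\<close>.\<close>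

definition \<Phi> :: "real poly poly" where
  "\<Phi> = [:1, [:2, 1:], [:1, 1:]:]"

definition \<Psi> :: "real poly poly" where
  "\<Psi> = \<Phi> - [:0, 1:] * pderiv \<Phi>"

lemma coeff_\<Phi>_mult:
  "coeff (\<Phi> * p) L = coeff p L + (if L = 0 then 0 else [:2, 1:] * coeff p (L - 1))
    + (if L < 2 then 0 else [:1, 1:] * coeff p (L - 2))"
proof -
  have "\<Phi> * p = p + pCons 0 (smult [:2, 1:] p + pCons 0 (smult [:1, 1:] p))"
    by (simp add: \<Phi>_def)
  then show ?thesis
    by (cases L; cases "L - 1") (simp_all add: algebra_simps)
qed

definition schroeder_triangle :: "nat \<Rightarrow> nat \<Rightarrow> real poly" where
  "schroeder_triangle n k = (if k \<le> n then coeff (\<Phi> ^ n * \<Psi>) (n - k) else 0)"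

lemma coeff_\<Phi>_power_mult_\<Psi>_Suc: "coeff (\<Phi> ^ n * \<Psi>) (Suc n) = 0"
  using coeff_power_mult_sub_x_pderiv[of n \<Phi> "Suc n"] unfolding \<Psi>_def by (simp add: of_nat_poly)

lemma schroeder_triangle_0: "schroeder_triangle 0 k = (if k = 0 then 1 else 0)"
  by (simp add: schroeder_triangle_def \<Psi>_def \<Phi>_def)

lemma schroeder_triangle_Suc:
  "schroeder_triangle (Suc n) k =
    (if k = 0 then 0 else schroeder_triangle n (k - 1)) + [:2, 1:] * schroeder_triangle n k
      + [:1, 1:] * schroeder_triangle n (Suc k)"
proof -
  have next_row: "\<Phi> ^ Suc n * \<Psi> = \<Phi> * (\<Phi> ^ n * \<Psi>)"
    by (simp add: mult.assoc)
  show ?thesis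
    unfolding schroeder_triangle_def next_row coeff_\<Phi>_mult
    by (cases k) (auto simp: coeff_\<Phi>_power_mult_\<Psi>_Suc Suc_diff_le)
qed

definition schroeder_production :: "nat \<Rightarrow> nat \<Rightarrow> real poly" where
  "schroeder_production p k =
    (if Suc p = k then 1 else if p = k then [:2, 1:] else if p = Suc k then [:1, 1:] else 0)"

lemma schroeder_triangle_Suc_eq_sum:
  assumes "Suc k < N"
  shows "schroeder_triangle (Suc n) k = (\<Sum>p<N. schroeder_triangle n p * schroeder_production p k)"
proof -
  have "(\<Sum>p<N. schroeder_triangle n p * schroeder_production p k) =
      (\<Sum>p<N. (if k \<noteq> 0 \<and> p = k - 1 then schroeder_triangle n p else 0)
        + (if p = k then [:2, 1:] * schroeder_triangle n p else 0)
        + (if p = Suc k then [:1, 1:] * schroeder_triangle n p else 0))"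
    by (rule sum.cong) (auto simp: schroeder_production_def)
  also have "\<dots> = schroeder_triangle (Suc n) k"
    using assms by (simp add: sum.distrib schroeder_triangle_Suc)
  finally show ?thesis ..
qed

lemma schroeder_triangle_nonneg: "nonneg_coeffs (schroeder_triangle n k)"
proof (induction n arbitrary: k)
  case 0
  then show ?case by (simp add: schroeder_triangle_0)
next
  case (Suc n)
  then show ?case
    unfolding schroeder_triangle_Suc by (intro nonneg_coeffs_add nonneg_coeffs_mult) simp_all
qed

lemma schroeder_production_nonneg: "nonneg_coeffs (schroeder_production p k)"
  by (simp add: schroeder_production_def)

lemma schroeder_production_minors_nonneg:
  assumes "q < p" "k < l"
  shows "nonneg_coeffs (schroeder_production q k * schroeder_production p l
    - schroeder_production q l * schroeder_production p k)"
proof (cases "q = k \<and> p = l \<and> l = Suc k")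
  case True
  then have "schroeder_production q k * schroeder_production p l - schroeder_production q l * schroeder_production p k
      = [:3, 3, 1:]"
    by (simp add: schroeder_production_def)
  then show ?thesis by simp
next
  case False
  with assms have vanishing: "schroeder_production q l * schroeder_production p k = 0"
    by (auto simp: schroeder_production_def)
  show ?thesis
    unfolding vanishing diff_zero by (intro nonneg_coeffs_mult schroeder_production_nonneg)
qed

lemma schroeder_triangle_minors_nonneg:
  "i < j \<Longrightarrow> k < l \<Longrightarrow> nonneg_coeffs (schroeder_triangle i k * schroeder_triangle j l
    - schroeder_triangle i l * schroeder_triangle j k)"
  by (rule production_matrix_minors_nonneg[where J = schroeder_production])
    (simp_all add: schroeder_triangle_0 schroeder_triangle_Suc_eq_sum schroeder_triangle_nonneg
      schroeder_production_minors_nonneg)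

section \<open>The first column and the q-Schroeder numbers\<close>

lemma coeff_one_plus_x_power: "coeff ([:1, 1:] ^ M :: 'a::comm_semiring_1 poly) k = of_nat (M choose k)"
proof (cases "k \<le> M")
  case True
  then show ?thesis by (simp add: coeff_linear_poly_power)
next
  case False
  then show ?thesis by (simp add: coeff_eq_0 degree_linear_power binomial_eq_0)
qed

lemma \<Phi>_eq: "\<Phi> = [:1, 1:] ^ 2 + monom [:0, 1:] 1 * [:1, 1:]"
  by (simp add: \<Phi>_def monom_altdef power2_eq_square one_pCons numeral_poly)

lemma \<Phi>_power:
  "\<Phi> ^ N = (\<Sum>i\<le>N. smult (of_nat (N choose i)) (monom (monom 1 i) i * [:1, 1:] ^ (2 * N - i)))"
proof -
  have "\<Phi> ^ N = (\<Sum>i\<le>N. of_nat (N choose i) * (monom [:0, 1:] 1 * [:1, 1:]) ^ i * ([:1, 1:] ^ 2) ^ (N - i))"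
    unfolding \<Phi>_eq by (subst add.commute) (rule binomial_ring)
  also have "\<dots> = (\<Sum>i\<le>N. smult (of_nat (N choose i)) (monom (monom 1 i) i * [:1, 1:] ^ (2 * N - i)))"
  proof (rule sum.cong[OF refl])
    fix i assume "i \<in> {..N}"
    then have "i + 2 * (N - i) = 2 * N - i" by simp
    then have "[:1, 1:] ^ i * ([:1, 1:] ^ 2) ^ (N - i) = ([:1, 1:] ^ (2 * N - i) :: real poly poly)"
      by (metis power_add power_mult)
    moreover have "[:0, 1:] ^ i = (monom 1 i :: real poly)"
      by (simp add: monom_altdef)
    ultimately show "of_nat (N choose i) * (monom [:0, 1:] 1 * [:1, 1:]) ^ i * ([:1, 1:] ^ 2) ^ (N - i) =
        smult (of_nat (N choose i)) (monom (monom 1 i) i * ([:1, 1:] ^ (2 * N - i) :: real poly poly))"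
      by (simp only: power_mult_distrib monom_power mult.assoc mult_1) (simp add: of_nat_poly)
  qed
  finally show ?thesis .
qed

lemma coeff_coeff_\<Phi>_power:
  "coeff (coeff (\<Phi> ^ N) L) j = real (N choose j) * (if j \<le> L then real ((2 * N - j) choose (L - j)) else 0)"
proof -
  have "coeff (coeff (\<Phi> ^ N) L) j =
      (\<Sum>i\<le>N. if i = j then real (N choose j) * (if j \<le> L then real ((2 * N - j) choose (L - j)) else 0) else 0)"
    unfolding \<Phi>_power coeff_sum by (intro sum.cong) (auto simp: coeff_monom_mult coeff_one_plus_x_power of_nat_poly)
  then show ?thesis
    by (simp add: binomial_eq_0)
qed

lemma coeff_coeff_\<Phi>_power_diagonal:
  "coeff (coeff (\<Phi> ^ Suc n) n) j = real (Suc n choose j) * real ((2 * n + 2 - j) choose (n + 2))"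
proof (cases "j \<le> n")
  case True
  then have "(2 * n + 2 - j) choose (n - j) = (2 * n + 2 - j) choose (n + 2)"
    by (subst binomial_symmetric) auto
  with True show ?thesis
    unfolding coeff_coeff_\<Phi>_power by simp
next
  case False
  then show ?thesis
    unfolding coeff_coeff_\<Phi>_power by (simp add: binomial_eq_0)
qed

lemma coeff_schroeder_triangle_0:
  "coeff (schroeder_triangle n 0) j = real (Suc n choose j) * real ((2 * n + 2 - j) choose (n + 2)) / real (Suc n)"
proof -
  have "of_nat (Suc n) * schroeder_triangle n 0 = coeff (\<Phi> ^ Suc n) n"
    using coeff_power_mult_sub_x_pderiv[of n \<Phi> n] unfolding \<Psi>_def schroeder_triangle_def by simp
  from arg_cong[OF this, of "\<lambda>p. coeff p j"]
  have "real (Suc n) * coeff (schroeder_triangle n 0) j = real (Suc n choose j) * real ((2 * n + 2 - j) choose (n + 2))"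
    unfolding coeff_coeff_\<Phi>_power_diagonal by (simp add: of_nat_poly)
  then show ?thesis
    by (simp add: field_simps)
qed

lemma coeff_q_schroeder:
  "coeff (q_schroeder n) j = (if j \<le> n then real ((2 * n - j) choose j) * catalan (n - j) else 0)"
proof -
  have "coeff (q_schroeder n) j =
      (\<Sum>i=0..n. if i = j then real ((2 * n - i) choose i) * catalan (n - i) else 0)"
    unfolding q_schroeder_def coeff_sum coeff_monom
    by (subst sum.atLeastAtMost_rev) (intro sum.cong; auto)
  then show ?thesis
    by simp
qed

lemma binomial_Suc_ratio: "Suc k * (n choose Suc k) = (n - k) * (n choose k)"
  using binomial_absorption[of k n] binomial_absorb_comp[of n k] by simp

lemma of_nat_times_catalan: "real n * catalan n = real ((2 * n) choose Suc n)"
proof -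
  have "real (Suc n) * real ((2 * n) choose Suc n) = real n * real ((2 * n) choose n)"
    using binomial_Suc_ratio[of n "2 * n"] by (metis of_nat_mult mult_2 add_diff_cancel_left')
  then show ?thesis
    unfolding catalan_def by (simp add: field_simps)
qed

text \<open>The coefficient of \<open>q^(b + 1)\<close> in \<open>r(a + b + 1) = (1 + q) T(a + b, 0)\<close>.\<close>

lemma schroeder_binomial_identity:
  fixes a b :: nat
  shows "real (a + b + 1) * (real ((2 * a + b + 1) choose (b + 1)) * catalan a) =
    real ((a + b + 1) choose (b + 1)) * real ((2 * a + b + 1) choose (a + b + 2)) +
    real ((a + b + 1) choose b) * real ((2 * a + b + 2) choose (a + b + 2))"
  (is "real (a + b + 1) * (?X * catalan a) = ?A * ?B1 + ?A' * ?B2")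
proof -
  let ?B = "real ((2 * a + b + 1) choose (a + b + 1))"
  let ?E = "real ((2 * a) choose a)"
  have "((2 * a + b + 1) choose (b + 1)) * ((2 * a) choose a) =
      ((a + b + 1) choose (b + 1)) * ((2 * a + b + 1) choose (a + b + 1))"
    using choose_mult_lemma[of a a "b + 1"] by (simp add: mult_2 mult_2_right ac_simps del: binomial_Suc_Suc)
  then have subset_of_subset: "?X * ?E = ?A * ?B"
    by (metis of_nat_mult)
  have "(a + b + 2) * ((2 * a + b + 1) choose (a + b + 2)) = a * ((2 * a + b + 1) choose (a + b + 1))"
    using binomial_Suc_ratio[of "a + b + 1" "2 * a + b + 1"] by simp
  then have B1: "real (a + b + 2) * ?B1 = a * ?B"
    by (metis of_nat_mult)
  have "(a + 1) * ((a + b + 1) choose b) = (b + 1) * ((a + b + 1) choose (b + 1))"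
    using binomial_Suc_ratio[of b "a + b + 1"] by simp
  then have A': "real (a + 1) * ?A' = (b + 1) * ?A"
    by (metis of_nat_mult of_nat_Suc)
  have "(a + b + 2) * ((2 * a + b + 2) choose (a + b + 2)) = (2 * a + b + 2) * ((2 * a + b + 1) choose (a + b + 1))"
    using Suc_times_binomial[of "a + b + 1" "2 * a + b + 1"] by simp
  then have B2: "real (a + b + 2) * ?B2 = (2 * a + b + 2) * ?B"
    by (metis of_nat_mult)
  have catalan: "real (a + 1) * catalan a = ?E"
    unfolding catalan_def by simp
  have "real (a + 1) * real (a + b + 2) * (real (a + b + 1) * (?X * catalan a)) =
      real (a + b + 1) * real (a + b + 2) * (?X * ?E)"
    by (subst catalan[symmetric]) (simp only: ac_simps)
  also have "\<dots> = (real a * (a + 1) + (b + 1) * (2 * a + b + 2)) * (?A * ?B)"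
    unfolding subset_of_subset by (simp add: algebra_simps)
  also have "\<dots> = real (a + 1) * ?A * (real (a + b + 2) * ?B1) + (real (a + 1) * ?A') * (real (a + b + 2) * ?B2)"
    unfolding B1 A' B2 by (simp add: algebra_simps)
  also have "\<dots> = real (a + 1) * real (a + b + 2) * (?A * ?B1 + ?A' * ?B2)"
    by (simp only: algebra_simps)
  finally show ?thesis
    by simp
qed

lemma q_schroeder_Suc: "q_schroeder (Suc n) = [:1, 1:] * schroeder_triangle n 0"
proof (rule poly_eqI)
  fix j
  define g where "g i = real (Suc n choose i) * real ((2 * n + 2 - i) choose (n + 2))" for i
  have triangle: "coeff ([:1, 1:] * schroeder_triangle n 0) j = (g j + (if j = 0 then 0 else g (j - 1))) / real (Suc n)"
    by (cases j) (simp_all add: coeff_schroeder_triangle_0 g_def add_divide_distrib)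
  have schroeder: "real (Suc n) * coeff (q_schroeder (Suc n)) j = g j + (if j = 0 then 0 else g (j - 1))"
  proof (cases j)
    case 0
    then show ?thesis
      using of_nat_times_catalan[of "Suc n"] by (simp add: coeff_q_schroeder g_def)
  next
    case (Suc b)
    show ?thesis
    proof (cases "b \<le> n")
      case True
      then obtain a where n: "n = a + b"
        using le_Suc_ex by (metis add.commute)
      show ?thesis
        using schroeder_binomial_identity[of a b]
        unfolding coeff_q_schroeder g_def Suc n by (simp add: algebra_simps del: binomial_Suc_Suc)
    next
      case False
      then show ?thesis
        by (simp add: coeff_q_schroeder g_def Suc binomial_eq_0)
    qed
  qed
  show "coeff (q_schroeder (Suc n)) j = coeff ([:1, 1:] * schroeder_triangle n 0) j"
    unfolding triangle schroeder[symmetric] by simp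
qed

lemma q_schroeder_defect_0: "q_schroeder 0 * q_schroeder 2 - q_schroeder 1 ^ 2 = [:1, 1:]"
proof -
  have "q_schroeder 0 = 1"
    by (simp add: q_schroeder_def catalan_def)
  then show ?thesis
    by (simp add: numeral_2_eq_2 q_schroeder_Suc schroeder_triangle_Suc schroeder_triangle_0 power2_eq_square)
qed

lemma log_convexity_defect_eq_minor:
  fixes A B C D E c d t :: "'a::comm_ring_1"
  assumes "C = c * A + d * B" and "E = c * C + d * D"
  shows "(t * A) * (t * E) - (t * C) ^ 2 = t ^ 2 * d * (A * D - B * C)"
  using assms by (simp add: algebra_simps power2_eq_square)

lemma q_schroeder_defect_eq_minor:
  "q_schroeder (Suc n) * q_schroeder (n + 3) - q_schroeder (n + 2) ^ 2 =
    [:1, 1:] ^ 3 * (schroeder_triangle n 0 * schroeder_triangle (Suc n) 1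
      - schroeder_triangle n 1 * schroeder_triangle (Suc n) 0)"
proof -
  have indices: "n + 2 = Suc (Suc n)" "n + 3 = Suc (Suc (Suc n))"
    by simp_all
  have "q_schroeder (Suc n) * q_schroeder (n + 3) - q_schroeder (n + 2) ^ 2 =
      [:1, 1:] ^ 2 * [:1, 1:] * (schroeder_triangle n 0 * schroeder_triangle (Suc n) 1
        - schroeder_triangle n 1 * schroeder_triangle (Suc n) 0)"
    unfolding indices q_schroeder_Suc
    by (rule log_convexity_defect_eq_minor[where c = "[:2, 1:]"]) (simp_all add: schroeder_triangle_Suc[of _ 0])
  then show ?thesis
    by (simp only: power2_eq_square power3_eq_cube)
qed

theorem corollary4p10:
  shows "q_log_convex q_schroeder"
  unfolding q_log_convex_def q_le_iff_nonneg_coeffs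
proof (intro allI impI)
  fix n :: nat
  assume "n \<ge> 1"
  then obtain m where n: "n = Suc m"
    by (cases n) auto
  show "nonneg_coeffs (q_schroeder (n - 1) * q_schroeder (n + 1) - q_schroeder n ^ 2)"
  proof (cases m)
    case 0
    then show ?thesis
      using q_schroeder_defect_0 n by (simp add: numeral_2_eq_2)
  next
    case (Suc k)
    then have indices: "n - 1 = Suc k" "n + 1 = k + 3" "q_schroeder n = q_schroeder (k + 2)"
      using n by simp_all
    show ?thesis
      unfolding indices q_schroeder_defect_eq_minor
      by (intro nonneg_coeffs_mult nonneg_coeffs_power schroeder_triangle_minors_nonneg) simp_all
  qed
qed

end
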